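(* Let $d\ge1$, $\sigma_0>0$ and $W_*\in\mathbb{R}^{d\times d}$. Consider the quadratic network $f_W(x)=\sum_{i=1}^d(w_i^Tx)^2=x^TW^TWx=\langle W^TW,xx^T\rangle$ with weight matrix $W\in\mathbb{R}^{d\times d}$ (rows $w_i$), labels $y(x)=x^TW_*^TW_*x$, inputs $x\sim\mathcal N(0,I_d)$, initialization satisfying $W(0)^TW(0)=\sigma_0I$, trained by gradient flow $\dot W=-\nabla_W\ell_{var}(W)$ on the variance loss $$\ell_{var}(W)=\frac1{16}\mathbb{E}_x\big[(y(x)-f_W(x))^2\big]-\frac1{16}\big(\mathbb{E}_x[y(x)-f_W(x)]\big)^2.$$ Then $W^TW$ and $W_*^TW_*$ remain simultaneously diagonalized by a fixed orthogonal matrix and $$\dot\sigma_i(t)=\sigma_i(t)(\sigma_i^*-\sigma_i(t)),$$ where $\sigma_i$ and $\sigma_i^*$ are the $i$th eigenvalues (singular values) of $W^TW$ and $W_*^TW_*$ respectively, corresponding to the same eigenvector.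
   Context: $\langle X,Y\rangle=\mathrm{tr}(X^TY)$. Gradient flow means $W(t)$ solves $\dot W=-\nabla_W\ell_{var}(W)$ in continuous time. *)

theory Defs
  imports "HOL-Probability.Probability"
begin

definition std_gaussian :: "(real^'d) measure" where
  "std_gaussian = density lborel (\<lambda>x. ennreal (\<Prod>i\<in>UNIV. std_normal_density (x $ i)))"

definition qnet :: "real^'d^'d \<Rightarrow> real^'d \<Rightarrow> real" where
  "qnet W x = x \<bullet> ((transpose W ** W) *v x)"

definition loss_var :: "real^'d^'d \<Rightarrow> real^'d^'d \<Rightarrow> real" where
  "loss_var Ws W =
     (1/16) * (\<integral>x. (qnet Ws x - qnet W x)^2 \<partial>std_gaussian)
   - (1/16) * (\<integral>x. (qnet Ws x - qnet W x) \<partial>std_gaussian)^2"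

end

theory Submission
  imports Defs
begin

(* For standard Gaussian inputs, Isserlis' theorem turns the variance loss into
   1/8 * norm (A - W^T W)^2 with A = Ws^T Ws (Frobenius norm), whose gradient is
   1/2 * W (W^T W - A).  Under the gradient flow the Gram matrix B = W^T W therefore solves
   B' = ((A - B) B + B (A - B)) / 2.  Conjugating with an orthogonal Q that diagonalises A
   (spectral theorem), P = Q^T B Q solves the same equation with a diagonal D = Q^T A Q in
   place of A.  Splitting P into its diagonal and off-diagonal parts shows that the squared
   norm of the off-diagonal part obeys phi' <= K phi on every bounded time interval; it
   vanishes at t = 0 because P(0) = sigma0 I, so by Gronwall P stays diagonal, and the
   diagonal entries of P' = ((D - P) P + P (D - P)) / 2 are exactly sigma_i (sigma_i^* - sigma_i). *)

section \<open>Gaussian moments\<close>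

lemma integral_lborel_prod_Basis:
  fixes f :: "'a::euclidean_space \<Rightarrow> real \<Rightarrow> real"
  assumes int: "\<And>b. b \<in> Basis \<Longrightarrow> integrable lborel (f b)"
  shows "integrable lborel (\<lambda>x::'a. \<Prod>b\<in>Basis. f b (x \<bullet> b))"
    and "(\<integral>x. (\<Prod>b\<in>Basis. f b (x \<bullet> b)) \<partial>(lborel::'a measure)) = (\<Prod>b\<in>Basis. integral\<^sup>L lborel (f b))"
proof -
  interpret product_sigma_finite "\<lambda>_::'a. lborel::real measure" ..
  have [measurable]: "b \<in> Basis \<Longrightarrow> f b \<in> borel_measurable borel" for b
    using borel_measurable_integrable[OF int] by simp
  have coord: "(\<Sum>b'\<in>Basis. g b' *\<^sub>R b') \<bullet> b = g b" if "b \<in> Basis" for g :: "'a \<Rightarrow> real" and b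
    using that by (simp add: inner_sum_left inner_Basis if_distrib cong: if_cong)
  have prod_coord: "(\<Prod>b\<in>Basis. f b ((\<Sum>b'\<in>Basis. g b' *\<^sub>R b') \<bullet> b)) = (\<Prod>b\<in>Basis. f b (g b))" for g
    by (rule prod.cong) (simp_all add: coord)
  have "integrable (\<Pi>\<^sub>M b\<in>Basis. lborel) (\<lambda>g. \<Prod>b\<in>(Basis::'a set). f b (g b))"
    by (rule product_integrable_prod) (auto intro: int)
  then show "integrable lborel (\<lambda>x::'a. \<Prod>b\<in>Basis. f b (x \<bullet> b))"
    by (subst lborel_eq) (simp add: integrable_distr_eq prod_coord)
  have "(\<integral>x. (\<Prod>b\<in>Basis. f b (x \<bullet> b)) \<partial>(lborel::'a measure))
      = (\<integral>g. (\<Prod>b\<in>(Basis::'a set). f b (g b)) \<partial>(\<Pi>\<^sub>M b\<in>Basis. lborel))"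
    by (subst lborel_eq) (simp add: integral_distr prod_coord)
  also have "\<dots> = (\<Prod>b\<in>Basis. integral\<^sup>L lborel (f b))"
    by (rule product_integral_prod) (auto intro: int)
  finally show "(\<integral>x. (\<Prod>b\<in>Basis. f b (x \<bullet> b)) \<partial>(lborel::'a measure)) = (\<Prod>b\<in>Basis. integral\<^sup>L lborel (f b))" .
qed

lemma prod_Basis_vec: "(\<Prod>b\<in>(Basis :: (real^'n) set). g b) = (\<Prod>i\<in>UNIV. g (axis i 1))"
proof -
  have "inj (\<lambda>i::'n. axis i (1::real))"
    by (auto simp: inj_def axis_eq_axis)
  moreover have "(Basis :: (real^'n) set) = range (\<lambda>i. axis i 1)"
    by (auto simp: Basis_vec_def)
  ultimately show ?thesis
    using prod.reindex[of "\<lambda>i::'n. axis i (1::real)" UNIV g] by simp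
qed

lemma
  fixes h :: "'d::finite \<Rightarrow> real \<Rightarrow> real"
  assumes int: "\<And>i. integrable lborel (\<lambda>t. std_normal_density t * h i t)"
  shows integrable_std_gaussian_prod: "integrable std_gaussian (\<lambda>x::real^'d. \<Prod>i\<in>UNIV. h i (x $ i))"
    and integral_std_gaussian_prod: "(\<integral>x. (\<Prod>i\<in>UNIV. h i (x $ i)) \<partial>(std_gaussian::(real^'d) measure))
          = (\<Prod>i\<in>UNIV. \<integral>t. std_normal_density t * h i t \<partial>lborel)"
proof -
  define k where "k b = (\<lambda>t. std_normal_density t * h (axis_index b) t)" for b :: "real^'d"
  have k_int: "integrable lborel (k b)" for b
    unfolding k_def by (rule int)
  have [measurable]: "h i \<in> borel_measurable borel" for i
  proof -
    have "(\<lambda>t. std_normal_density t * h i t / std_normal_density t) \<in> borel_measurable borel"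
      using borel_measurable_integrable[OF int[of i]] by measurable
    then show ?thesis by (simp add: std_normal_density_def normal_density_def)
  qed
  have prod_eq: "(\<Prod>i\<in>UNIV. std_normal_density (x $ i)) * (\<Prod>i\<in>UNIV. h i (x $ i)) = (\<Prod>b\<in>Basis. k b (x \<bullet> b))"
    for x :: "real^'d"
    by (simp add: prod_Basis_vec k_def inner_axis prod.distrib)
  have nonneg: "AE x in lborel. 0 \<le> (\<Prod>i\<in>UNIV. std_normal_density ((x::real^'d) $ i))"
    by (intro AE_I2 prod_nonneg) simp
  show "integrable std_gaussian (\<lambda>x::real^'d. \<Prod>i\<in>UNIV. h i (x $ i))"
    unfolding std_gaussian_def
    by (subst integrable_density) (auto simp: nonneg prod_eq intro: integral_lborel_prod_Basis k_int)
  have "(\<integral>x. (\<Prod>i\<in>UNIV. h i (x $ i)) \<partial>(std_gaussian::(real^'d) measure))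
      = (\<integral>x. (\<Prod>b\<in>Basis. k b (x \<bullet> b)) \<partial>lborel)"
    unfolding std_gaussian_def by (subst integral_density) (auto simp: nonneg prod_eq)
  also have "\<dots> = (\<Prod>b\<in>Basis. integral\<^sup>L lborel (k b))"
    by (rule integral_lborel_prod_Basis) (rule k_int)
  finally show "(\<integral>x. (\<Prod>i\<in>UNIV. h i (x $ i)) \<partial>(std_gaussian::(real^'d) measure))
          = (\<Prod>i\<in>UNIV. \<integral>t. std_normal_density t * h i t \<partial>lborel)"
    by (simp add: prod_Basis_vec k_def)
qed

definition std_normal_moment :: "nat \<Rightarrow> real" where
  "std_normal_moment n = (\<integral>t. std_normal_density t * t ^ n \<partial>lborel)"

lemma std_normal_moment_eq:
  "std_normal_moment n = (if even n then fact n / (2 ^ (n div 2) * fact (n div 2)) else 0)"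
proof (cases "even n")
  case True
  then obtain k where "n = 2 * k" by blast
  then show ?thesis
    using integral_std_normal_moment_even[of k] by (simp add: std_normal_moment_def)
next
  case False
  then obtain k where "n = 2 * k + 1" using oddE by blast
  then show ?thesis
    using integral_std_normal_moment_odd[of k] by (simp add: std_normal_moment_def)
qed

lemma
  fixes n :: "'d::finite \<Rightarrow> nat"
  shows integrable_std_gaussian_monomial: "integrable std_gaussian (\<lambda>x::real^'d. \<Prod>i\<in>UNIV. x $ i ^ n i)"
    and integral_std_gaussian_monomial:
      "(\<integral>x. (\<Prod>i\<in>UNIV. x $ i ^ n i) \<partial>(std_gaussian::(real^'d) measure)) = (\<Prod>i\<in>UNIV. std_normal_moment (n i))"
  using integrable_std_gaussian_prod[of "\<lambda>i t. t ^ n i"] integral_std_gaussian_prod[of "\<lambda>i t. t ^ n i"]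
  by (simp_all add: integrable_std_normal_moment std_normal_moment_def)

lemma coordinate_as_monomial: "(x::real^'d::finite) $ a = (\<Prod>i\<in>UNIV. x $ i ^ of_bool (i = a))"
proof -
  have "x $ i ^ of_bool (i = a) = (if i = a then x $ i else 1)" for i
    by simp
  then show ?thesis
    by simp
qed

lemma std_gaussian_monomial_support:
  fixes n :: "'d::finite \<Rightarrow> nat"
  assumes "\<And>i. i \<notin> S \<Longrightarrow> n i = 0"
  shows "(\<Prod>i\<in>UNIV. std_normal_moment (n i)) = (\<Prod>i\<in>S. std_normal_moment (n i))"
  by (rule prod.mono_neutral_right) (auto simp: assms std_normal_moment_eq)

lemma
  fixes a b :: "'d::finite"
  shows integrable_std_gaussian_second_moment: "integrable std_gaussian (\<lambda>x::real^'d. x $ a * x $ b)"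
    and integral_std_gaussian_second_moment:
      "(\<integral>x. x $ a * x $ b \<partial>(std_gaussian::(real^'d) measure)) = of_bool (a = b)"
proof -
  define n :: "'d \<Rightarrow> nat" where "n i = of_bool (i = a) + of_bool (i = b)" for i
  have monomial: "x $ a * x $ b = (\<Prod>i\<in>UNIV. x $ i ^ n i)" for x :: "real^'d"
    by (subst (1 2) coordinate_as_monomial) (simp add: n_def power_add prod.distrib)
  show "integrable std_gaussian (\<lambda>x::real^'d. x $ a * x $ b)"
    unfolding monomial by (rule integrable_std_gaussian_monomial)
  have "(\<integral>x. x $ a * x $ b \<partial>(std_gaussian::(real^'d) measure)) = (\<Prod>i\<in>{a,b}. std_normal_moment (n i))"
    unfolding monomial integral_std_gaussian_monomial
    by (rule std_gaussian_monomial_support) (simp add: n_def)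
  then show "(\<integral>x. x $ a * x $ b \<partial>(std_gaussian::(real^'d) measure)) = of_bool (a = b)"
    by (cases "a = b") (simp_all add: n_def std_normal_moment_eq)
qed

lemma
  fixes a b c e :: "'d::finite"
  shows integrable_std_gaussian_fourth_moment:
      "integrable std_gaussian (\<lambda>x::real^'d. x $ a * x $ b * x $ c * x $ e)"
    and integral_std_gaussian_fourth_moment:
      "(\<integral>x. x $ a * x $ b * x $ c * x $ e \<partial>(std_gaussian::(real^'d) measure)) =
         of_bool (a = b \<and> c = e) + of_bool (a = c \<and> b = e) + of_bool (a = e \<and> b = c)"
proof -
  define n :: "'d \<Rightarrow> nat" where "n i = of_bool (i = a) + of_bool (i = b) + of_bool (i = c) + of_bool (i = e)" for i
  have monomial: "x $ a * x $ b * x $ c * x $ e = (\<Prod>i\<in>UNIV. x $ i ^ n i)" for x :: "real^'d"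
    by (subst (1 2 3 4) coordinate_as_monomial) (simp add: n_def power_add prod.distrib)
  show "integrable std_gaussian (\<lambda>x::real^'d. x $ a * x $ b * x $ c * x $ e)"
    unfolding monomial by (rule integrable_std_gaussian_monomial)
  have "(\<integral>x. x $ a * x $ b * x $ c * x $ e \<partial>(std_gaussian::(real^'d) measure))
      = (\<Prod>i\<in>{a,b,c,e}. std_normal_moment (n i))"
    unfolding monomial integral_std_gaussian_monomial
    by (rule std_gaussian_monomial_support) (simp add: n_def)
  then show "(\<integral>x. x $ a * x $ b * x $ c * x $ e \<partial>(std_gaussian::(real^'d) measure)) =
         of_bool (a = b \<and> c = e) + of_bool (a = c \<and> b = e) + of_bool (a = e \<and> b = c)"
    by (cases "a = b"; cases "a = c"; cases "a = e"; cases "b = c"; cases "b = e"; cases "c = e")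
       (simp_all add: n_def insert_commute std_normal_moment_eq)
qed

section \<open>Frobenius norm and matrix products\<close>

lemma power2_norm_matrix: "(norm (A :: real^'n^'m))\<^sup>2 = (\<Sum>i\<in>UNIV. \<Sum>j\<in>UNIV. (A $ i $ j)\<^sup>2)"
  unfolding power2_norm_eq_inner by (simp add: inner_vec_def power2_eq_square)

lemma norm_matrix_mult_le: "norm ((A :: real^'n^'m) ** (B :: real^'p^'n)) \<le> norm A * norm B"
proof (rule power2_le_imp_le)
  have "(norm (A ** B))\<^sup>2 = (\<Sum>i\<in>UNIV. \<Sum>j\<in>UNIV. (\<Sum>k\<in>UNIV. A $ i $ k * B $ k $ j)\<^sup>2)"
    by (simp add: power2_norm_matrix matrix_matrix_mult_def)
  also have "\<dots> \<le> (\<Sum>i\<in>UNIV. \<Sum>j\<in>UNIV. (\<Sum>k\<in>UNIV. (A $ i $ k)\<^sup>2) * (\<Sum>k\<in>UNIV. (B $ k $ j)\<^sup>2))"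
    by (intro sum_mono Cauchy_Schwarz_ineq_sum)
  also have "\<dots> = (\<Sum>i\<in>UNIV. \<Sum>k\<in>UNIV. (A $ i $ k)\<^sup>2) * (\<Sum>j\<in>UNIV. \<Sum>k\<in>UNIV. (B $ k $ j)\<^sup>2)"
    by (simp only: sum_product)
  also have "\<dots> = (norm A * norm B)\<^sup>2"
    by (simp add: power2_norm_matrix power_mult_distrib
        sum.swap[where A = UNIV and B = UNIV and g = "\<lambda>k j. (B $ k $ j)\<^sup>2"])
  finally show "(norm (A ** B))\<^sup>2 \<le> (norm A * norm B)\<^sup>2" .
qed simp

lemma bounded_bilinear_matrix_mult:
  "bounded_bilinear ((**) :: real^'n^'m \<Rightarrow> real^'p^'n \<Rightarrow> real^'p^'m)"
proof
  fix A A' :: "real^'n^'m" and B B' :: "real^'p^'n" and r :: real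
  show "(A + A') ** B = A ** B + A' ** B" "A ** (B + B') = A ** B + A ** B'"
    by (simp_all add: matrix_matrix_mult_def vec_eq_iff sum.distrib algebra_simps)
  show "r *\<^sub>R A ** B = r *\<^sub>R (A ** B)" "A ** r *\<^sub>R B = r *\<^sub>R (A ** B)"
    by (simp_all add: matrix_scalar_ac scalar_matrix_assoc)
  show "\<exists>K. \<forall>A B. norm ((A :: real^'n^'m) ** (B :: real^'p^'n)) \<le> norm A * norm B * K"
    using norm_matrix_mult_le by (metis mult.right_neutral)
qed

interpretation matrix_mult: bounded_bilinear "(**) :: real^'n^'m \<Rightarrow> real^'p^'n \<Rightarrow> real^'p^'m"
  by (rule bounded_bilinear_matrix_mult)

lemma inner_matrix_eq_trace: "inner A B = trace (transpose A ** (B :: real^'n^'m))"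
  unfolding inner_vec_def trace_def matrix_matrix_mult_def transpose_def
  by simp (rule sum.swap)

lemma norm_transpose [simp]: "norm (transpose A) = norm (A :: real^'n^'m)"
proof -
  have "(norm (transpose A))\<^sup>2 = (norm A)\<^sup>2"
    unfolding power2_norm_eq_inner inner_matrix_eq_trace transpose_transpose
    by (rule trace_mul_sym)
  then show ?thesis
    by simp
qed

lemma bounded_linear_transpose: "bounded_linear (transpose :: real^'n^'m \<Rightarrow> real^'m^'n)"
proof (rule bounded_linear_intro[where K = 1])
  show "norm (transpose A) \<le> norm A * 1" for A :: "real^'n^'m"
    by simp
qed (simp_all add: transpose_def vec_eq_iff)

lemma inner_matrix_mult_right:
  "inner (A :: real^'p^'m) ((B :: real^'n^'m) ** C) = inner (transpose B ** A) C"
  by (simp add: inner_matrix_eq_trace matrix_transpose_mul matrix_mul_assoc)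

lemma inner_matrix_mult_left:
  "inner ((B :: real^'n^'m) ** C) (A :: real^'p^'m) = inner B (A ** transpose C)"
  unfolding inner_matrix_eq_trace matrix_transpose_mul
  by (metis matrix_mul_assoc trace_mul_sym)

lemma matrix_congruence_nth:
  "(transpose Q ** M ** Q) $ i $ j = column i Q \<bullet> (M *v column j Q)"
  for Q :: "real^'n^'m" and M :: "real^'m^'m"
proof -
  have "(transpose Q ** M ** Q) $ i $ j = (\<Sum>k\<in>UNIV. \<Sum>l\<in>UNIV. Q $ l $ i * (M $ l $ k * Q $ k $ j))"
    by (simp add: matrix_matrix_mult_def transpose_def sum_distrib_right mult.assoc)
  also have "\<dots> = (\<Sum>l\<in>UNIV. \<Sum>k\<in>UNIV. Q $ l $ i * (M $ l $ k * Q $ k $ j))"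
    by (rule sum.swap)
  also have "\<dots> = column i Q \<bullet> (M *v column j Q)"
    by (simp add: inner_vec_def matrix_vector_mult_def column_def sum_distrib_left)
  finally show ?thesis .
qed

lemma transpose_gram [simp]: "transpose (transpose A ** A) = transpose A ** (A :: real^'n^'m)"
  by (simp add: matrix_transpose_mul)

lemma transpose_diff: "transpose (A - B) = transpose A - transpose (B :: real^'n^'m)"
  by (rule linear_diff[OF bounded_linear.linear[OF bounded_linear_transpose]])

lemma transpose_uminus: "transpose (- A) = - transpose (A :: real^'n^'m)"
  by (simp add: transpose_def vec_eq_iff)

section \<open>The variance loss and its gradient\<close>

lemma quadratic_form_eq_sum:
  "x \<bullet> (M *v x) = (\<Sum>a\<in>UNIV. \<Sum>b\<in>UNIV. M $ a $ b * (x $ a * x $ b))"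
  for M :: "real^'d^'d"
  by (simp add: inner_vec_def matrix_vector_mult_def sum_distrib_left mult_ac)

lemma integral_std_gaussian_quadratic_form:
  "(\<integral>x. x \<bullet> (M *v x) \<partial>std_gaussian) = trace (M :: real^'d::finite^'d)"
  unfolding quadratic_form_eq_sum
  by (simp add: integrable_std_gaussian_second_moment integral_std_gaussian_second_moment
      trace_def of_bool_def if_distrib cong: if_cong)

lemma quadratic_form_power2_eq_sum:
  "(x \<bullet> (M *v x))\<^sup>2 = (\<Sum>a\<in>UNIV. \<Sum>c\<in>UNIV. \<Sum>b\<in>UNIV. \<Sum>e\<in>UNIV.
     (M $ a $ b * M $ c $ e) * (x $ a * x $ b * x $ c * x $ e))"
  for M :: "real^'d^'d"
  unfolding quadratic_form_eq_sum power2_eq_square sum_product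
  by (simp add: mult_ac)

lemma integral_std_gaussian_quadratic_form_power2:
  fixes M :: "real^'d::finite^'d"
  shows "(\<integral>x. (x \<bullet> (M *v x))\<^sup>2 \<partial>std_gaussian) = (trace M)\<^sup>2 + (norm M)\<^sup>2 + trace (M ** M)"
proof -
  have "(\<integral>x. (x \<bullet> (M *v x))\<^sup>2 \<partial>std_gaussian)
      = (\<Sum>a\<in>UNIV. \<Sum>c\<in>UNIV. \<Sum>b\<in>UNIV. \<Sum>e\<in>UNIV. M $ a $ b * M $ c $ e *
           (of_bool (a = b \<and> c = e) + of_bool (a = c \<and> b = e) + of_bool (a = e \<and> b = c)))"
    unfolding quadratic_form_power2_eq_sum
    by (simp add: integrable_std_gaussian_fourth_moment integral_std_gaussian_fourth_moment)
  also have "\<dots> = (\<Sum>a\<in>UNIV. M $ a $ a) * (\<Sum>c\<in>UNIV. M $ c $ c)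
      + (\<Sum>a\<in>UNIV. \<Sum>b\<in>UNIV. M $ a $ b * M $ a $ b) + (\<Sum>a\<in>UNIV. \<Sum>b\<in>UNIV. M $ a $ b * M $ b $ a)"
  proof -
    have of_bool_conj_mult: "x * of_bool (P \<and> Q) = (if P then if Q then x else 0 else 0)"
      for P Q and x :: real
      by simp
    have sum_if_const: "(\<Sum>e\<in>UNIV. if P then f e else 0) = (if P then \<Sum>e\<in>UNIV. f e else (0::real))"
      for P and f :: "'d \<Rightarrow> real"
      by simp
    show ?thesis
      by (simp add: distrib_left sum.distrib of_bool_conj_mult sum_if_const sum_product)
  qed
  also have "\<dots> = (trace M)\<^sup>2 + (norm M)\<^sup>2 + trace (M ** M)"
    unfolding power2_norm_matrix by (simp add: trace_def power2_eq_square matrix_matrix_mult_def)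
  finally show ?thesis .
qed

lemma trace_square_symmetric: "transpose M = M \<Longrightarrow> trace (M ** M) = (norm M)\<^sup>2"
  for M :: "real^'d^'d"
  unfolding power2_norm_eq_inner inner_matrix_eq_trace by simp

lemma qnet_diff: "qnet Ws x - qnet W x = x \<bullet> ((transpose Ws ** Ws - transpose W ** W) *v x)"
  by (simp add: qnet_def matrix_vector_mult_diff_rdistrib inner_diff_right)

text \<open>By Isserlis' theorem the variance of \<open>x \<bullet> (M *v x)\<close> is \<open>2 * (norm M)\<^sup>2\<close> for symmetric \<open>M\<close>.\<close>
lemma loss_var_eq_norm: "loss_var Ws W = (norm (transpose Ws ** Ws - transpose W ** W))\<^sup>2 / 8"
proof -
  define M where "M = transpose Ws ** Ws - transpose W ** W"
  have "transpose M = M"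
    by (simp add: M_def transpose_diff)
  then show ?thesis
    unfolding loss_var_def qnet_diff M_def[symmetric]
    by (simp add: integral_std_gaussian_quadratic_form integral_std_gaussian_quadratic_form_power2
        trace_square_symmetric field_simps)
qed

lemma gderiv_unique: "GDERIV f x :> D \<Longrightarrow> GDERIV f x :> D' \<Longrightarrow> D = D'"
  unfolding gderiv_def
  by (metis has_derivative_unique inner_commute inner_diff_left inner_diff_right inner_eq_zero_iff
      right_minus_eq)

lemma gderiv_gram_distance:
  fixes A :: "real^'n^'n" and W :: "real^'n^'m"
  assumes "transpose A = A"
  shows "GDERIV (\<lambda>W. (norm (A - transpose W ** W))\<^sup>2 / 8) W :> (1/2) *\<^sub>R (W ** (transpose W ** W - A))"
proof -
  define N where "N = A - transpose W ** W"
  have "transpose N = N"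
    using assms by (simp add: N_def transpose_diff)
  have inner_N: "inner N (transpose h ** W + transpose W ** h) = 2 * inner h (W ** N)" for h
  proof -
    have "inner N (transpose h ** W) = inner (h ** N) W"
      using inner_matrix_mult_right[of N "transpose h" W] by simp
    also have "\<dots> = inner h (W ** N)"
      using inner_matrix_mult_left[of h N W] \<open>transpose N = N\<close> by simp
    finally have "inner N (transpose h ** W) = inner h (W ** N)" .
    moreover have "inner N (transpose W ** h) = inner h (W ** N)"
      using inner_matrix_mult_right[of N "transpose W" h] by (simp add: inner_commute)
    ultimately show ?thesis
      by (simp add: inner_add_right)
  qed
  have gram: "FDERIV (\<lambda>W. transpose W ** W) W :> (\<lambda>h. transpose W ** h + transpose h ** W)"
    by (rule matrix_mult.FDERIV[OF bounded_linear.has_derivative[OF bounded_linear_transpose]])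
      (rule has_derivative_ident)+
  have dist: "FDERIV (\<lambda>W. A - transpose W ** W) W :> (\<lambda>h. - (transpose h ** W + transpose W ** h))"
    by (rule has_derivative_eq_rhs[OF has_derivative_diff[OF has_derivative_const gram]]) auto
  have deriv_eq: "(inner N (- (transpose h ** W + transpose W ** h))
      + inner (- (transpose h ** W + transpose W ** h)) N) / 8
      = inner h ((1/2) *\<^sub>R (W ** (transpose W ** W - A)))" for h
  proof -
    have "W ** (transpose W ** W - A) = - (W ** N)"
      by (simp add: N_def matrix_mult.diff_right)
    then show ?thesis
      using inner_N[of h] by (simp add: inner_commute[of _ N] inner_minus_right del: minus_add_distrib)
  qed
  have "FDERIV (\<lambda>W. inner (A - transpose W ** W) (A - transpose W ** W) / 8) W
      :> (\<lambda>h. (inner N (- (transpose h ** W + transpose W ** h))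
               + inner (- (transpose h ** W + transpose W ** h)) N) / 8)"
    unfolding N_def
    by (rule bounded_linear.has_derivative[OF bounded_linear_divide has_derivative_inner[OF dist dist]])
  then show ?thesis
    unfolding gderiv_def power2_norm_eq_inner deriv_eq .
qed

section \<open>Spectral theorem for symmetric matrices\<close>

definition diagonal_matrix :: "'a::zero^'n^'n \<Rightarrow> bool" where
  "diagonal_matrix A \<longleftrightarrow> (\<forall>i j. i \<noteq> j \<longrightarrow> A $ i $ j = 0)"

lemma diagonal_matrix_mult: "diagonal_matrix A \<Longrightarrow> diagonal_matrix B \<Longrightarrow> diagonal_matrix (A ** B)"
  for A B :: "real^'n^'n"
  unfolding diagonal_matrix_def matrix_matrix_mult_def
  by (auto intro!: sum.neutral) metis

lemma diagonal_matrix_add: "diagonal_matrix A \<Longrightarrow> diagonal_matrix B \<Longrightarrow> diagonal_matrix (A + B)"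
  for A B :: "real^'n^'n"
  by (simp add: diagonal_matrix_def)

lemma diagonal_matrix_diff: "diagonal_matrix A \<Longrightarrow> diagonal_matrix B \<Longrightarrow> diagonal_matrix (A - B)"
  for A B :: "real^'n^'n"
  by (simp add: diagonal_matrix_def)

lemma diagonal_matrix_scaleR: "diagonal_matrix A \<Longrightarrow> diagonal_matrix (c *\<^sub>R A)"
  for A :: "real^'n^'n"
  by (simp add: diagonal_matrix_def)

lemma quadratic_nonpos_imp_linear_coeff_zero:
  fixes a b :: real
  assumes "\<And>s. a * s + b * s\<^sup>2 \<le> 0"
  shows "a = 0"
proof -
  have "DERIV (\<lambda>s. a * s + b * s\<^sup>2) 0 :> a"
    by (auto intro!: derivative_eq_intros)
  then show "a = 0"
    by (rule DERIV_local_max[where d = 1]) (simp_all add: assms)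
qed

lemma symmetric_matrix_inner: "transpose A = A \<Longrightarrow> x \<bullet> (A *v y) = (A *v x) \<bullet> y"
  for A :: "real^'n^'n"
  by (metis dot_lmul_matrix transpose_matrix_vector)

text \<open>If \<open>u = A v - l v\<close> were nonzero, the Rayleigh quotient would increase to first order
  along \<open>v + s u\<close>.\<close>
lemma rayleigh_maximizer_eigenvector:
  fixes A :: "real^'n^'n"
  assumes sym: "transpose A = A" and S: "subspace S" and invariant: "\<And>x. x \<in> S \<Longrightarrow> A *v x \<in> S"
    and v: "v \<in> S" "norm v = 1"
    and max: "\<And>y. y \<in> S \<Longrightarrow> norm y = 1 \<Longrightarrow> y \<bullet> (A *v y) \<le> v \<bullet> (A *v v)"
  shows "A *v v = (v \<bullet> (A *v v)) *\<^sub>R v"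
proof -
  define l where "l = v \<bullet> (A *v v)"
  have bound: "y \<bullet> (A *v y) \<le> l * (norm y)\<^sup>2" if "y \<in> S" for y
  proof (cases "y = 0")
    case False
    then have "(1 / norm y)\<^sup>2 * (y \<bullet> (A *v y)) \<le> l"
      using max[of "(1 / norm y) *\<^sub>R y"] S \<open>y \<in> S\<close>
      by (simp add: subspace_scale matrix_vector_mult_scaleR power2_eq_square l_def)
    with False show ?thesis
      by (simp add: field_simps)
  qed simp
  define u where "u = A *v v - l *\<^sub>R v"
  have "u \<in> S"
    unfolding u_def using S invariant v(1) by (simp add: subspace_diff subspace_scale)
  have "v \<bullet> v = 1"
    using v(2) by (simp add: norm_eq_1)
  then have "v \<bullet> u = 0"
    by (simp add: u_def l_def inner_diff_right)
  have "u \<bullet> (A *v v) = u \<bullet> u"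
    using \<open>v \<bullet> u = 0\<close> by (simp add: u_def inner_diff_right inner_commute)
  have "2 * (u \<bullet> u) * s + (u \<bullet> (A *v u) - l * (u \<bullet> u)) * s\<^sup>2 \<le> 0" for s
  proof -
    have "v + s *\<^sub>R u \<in> S"
      using S v(1) \<open>u \<in> S\<close> by (simp add: subspace_add subspace_scale)
    then have "(v + s *\<^sub>R u) \<bullet> (A *v (v + s *\<^sub>R u)) \<le> l * (norm (v + s *\<^sub>R u))\<^sup>2"
      by (rule bound)
    moreover have "(norm (v + s *\<^sub>R u))\<^sup>2 = 1 + s\<^sup>2 * (u \<bullet> u)"
      unfolding power2_norm_eq_inner using \<open>v \<bullet> v = 1\<close> \<open>v \<bullet> u = 0\<close>
      by (simp add: inner_add_left inner_add_right inner_commute power2_eq_square)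
    moreover have "(v + s *\<^sub>R u) \<bullet> (A *v (v + s *\<^sub>R u)) = l + 2 * s * (u \<bullet> u) + s\<^sup>2 * (u \<bullet> (A *v u))"
      using symmetric_matrix_inner[OF sym, of v u] \<open>u \<bullet> (A *v v) = u \<bullet> u\<close>
      by (simp add: matrix_vector_right_distrib matrix_vector_mult_scaleR inner_add_left
          inner_add_right inner_commute power2_eq_square l_def algebra_simps)
    ultimately show ?thesis
      by (simp add: algebra_simps)
  qed
  then have "2 * (u \<bullet> u) = 0"
    by (rule quadratic_nonpos_imp_linear_coeff_zero)
  then show ?thesis
    by (simp add: u_def l_def)
qed

lemma symmetric_eigenvector_orthogonal_to:
  fixes A :: "real^'n^'n"
  assumes sym: "transpose A = A" and "finite B" and "card B < CARD('n)"
    and eigen: "\<And>b. b \<in> B \<Longrightarrow> \<exists>l. A *v b = l *\<^sub>R b"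
  shows "\<exists>v. norm v = 1 \<and> (\<exists>l. A *v v = l *\<^sub>R v) \<and> (\<forall>b\<in>B. orthogonal b v)"
proof -
  define S where "S = {x. \<forall>b\<in>B. orthogonal b x}"
  have S: "subspace S"
    unfolding S_def subspace_def by (auto simp: orthogonal_clauses)
  have invariant: "A *v x \<in> S" if "x \<in> S" for x
  proof -
    have "orthogonal b (A *v x)" if "b \<in> B" for b
    proof -
      obtain l where "A *v b = l *\<^sub>R b"
        using eigen \<open>b \<in> B\<close> by blast
      then show ?thesis
        using \<open>x \<in> S\<close> \<open>b \<in> B\<close> symmetric_matrix_inner[OF sym, of b x]
        by (simp add: S_def orthogonal_def)
    qed
    then show ?thesis
      by (simp add: S_def)
  qed
  have "dim B < DIM(real^'n)"
    using dim_le_card[OF span_superset \<open>finite B\<close>] \<open>card B < CARD('n)\<close> by simp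
  then obtain x where "x \<noteq> 0" "\<And>y. y \<in> span B \<Longrightarrow> orthogonal x y"
    using orthogonal_to_subspace_exists by blast
  then have "x \<in> S"
    by (auto simp: S_def orthogonal_commute span_base)
  define K where "K = S \<inter> sphere 0 1"
  have "compact K"
    unfolding K_def by (rule closed_Int_compact[OF closed_subspace[OF S] compact_sphere])
  moreover have "(1 / norm x) *\<^sub>R x \<in> K"
    unfolding K_def using \<open>x \<in> S\<close> \<open>x \<noteq> 0\<close> S by (simp add: subspace_scale)
  moreover have "continuous_on K (\<lambda>y. y \<bullet> (A *v y))"
    by (intro continuous_intros)
  ultimately obtain v where "v \<in> K" and max: "\<And>y. y \<in> K \<Longrightarrow> y \<bullet> (A *v y) \<le> v \<bullet> (A *v v)"
    using continuous_attains_sup[of K "\<lambda>y. y \<bullet> (A *v y)"] by blast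
  then have "v \<in> S" "norm v = 1"
    by (auto simp: K_def)
  moreover have "A *v v = (v \<bullet> (A *v v)) *\<^sub>R v"
    using rayleigh_maximizer_eigenvector[OF sym S invariant \<open>v \<in> S\<close> \<open>norm v = 1\<close>] max
    by (simp add: K_def)
  ultimately show ?thesis
    unfolding S_def by blast
qed

lemma symmetric_orthonormal_eigenvectors:
  fixes A :: "real^'n^'n"
  assumes sym: "transpose A = A" and "k \<le> CARD('n)"
  shows "\<exists>B. finite B \<and> card B = k \<and> pairwise orthogonal B \<and> (\<forall>b\<in>B. norm b = 1 \<and> (\<exists>l. A *v b = l *\<^sub>R b))"
  using \<open>k \<le> CARD('n)\<close>
proof (induction k)
  case 0
  show ?case
    by (intro exI[of _ "{}"]) simp
next
  case (Suc k)
  then obtain B where B: "finite B" "card B = k" "pairwise orthogonal B"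
    and eigen: "\<forall>b\<in>B. norm b = 1 \<and> (\<exists>l. A *v b = l *\<^sub>R b)"
    by auto
  then obtain v where v: "norm v = 1" "\<exists>l. A *v v = l *\<^sub>R v" "\<forall>b\<in>B. orthogonal b v"
    using symmetric_eigenvector_orthogonal_to[OF sym \<open>finite B\<close>] Suc.prems by auto
  then have "v \<notin> B"
    by (auto simp: orthogonal_def)
  then show ?case
    using B eigen v
    by (intro exI[of _ "insert v B"]) (auto simp: pairwise_insert orthogonal_commute)
qed

theorem symmetric_matrix_orthogonally_diagonalizable:
  fixes A :: "real^'n^'n"
  assumes sym: "transpose A = A"
  shows "\<exists>Q. orthogonal_matrix Q \<and> diagonal_matrix (transpose Q ** A ** Q)"
proof -
  obtain B where B: "finite B" "card B = CARD('n)" and orth: "pairwise orthogonal B"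
    and eigen: "\<forall>b\<in>B. norm b = 1 \<and> (\<exists>l. A *v b = l *\<^sub>R b)"
    using symmetric_orthonormal_eigenvectors[OF sym order.refl] by blast
  obtain g where g: "bij_betw g (UNIV :: 'n set) B"
    using finite_same_card_bij[of "UNIV :: 'n set" B] B by auto
  define Q :: "real^'n^'n" where "Q = (\<chi> i j. g j $ i)"
  have g_B: "g i \<in> B" for i
    using g by (auto simp: bij_betw_def)
  have g_inner: "g i \<bullet> g j = of_bool (i = j)" for i j
  proof (cases "i = j")
    case True
    then show ?thesis
      using eigen g_B[of i] by (simp add: norm_eq_1)
  next
    case False
    then have "g i \<noteq> g j"
      using bij_betw_imp_inj_on[OF g] by (auto simp: inj_on_def)
    then show ?thesis
      using orth g_B[of i] g_B[of j] False by (simp add: pairwise_def orthogonal_def)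
  qed
  have Q_entries: "(transpose Q ** M ** Q) $ i $ j = g i \<bullet> (M *v g j)" for M i j
    by (simp add: matrix_congruence_nth Q_def column_def)
  have "(transpose Q ** Q) $ i $ j = of_bool (i = j)" for i j
    using Q_entries[of "mat 1" i j] by (simp add: g_inner)
  then have "transpose Q ** Q = mat 1"
    by (simp add: vec_eq_iff mat_def)
  moreover have "diagonal_matrix (transpose Q ** A ** Q)"
    unfolding diagonal_matrix_def
  proof (intro allI impI)
    fix i j :: 'n
    assume "i \<noteq> j"
    obtain l where "A *v g j = l *\<^sub>R g j"
      using eigen g by (auto simp: bij_betw_def)
    then show "(transpose Q ** A ** Q) $ i $ j = 0"
      using \<open>i \<noteq> j\<close> by (simp add: Q_entries g_inner)
  qed
  ultimately show ?thesis
    by (auto simp: orthogonal_matrix)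
qed

section \<open>The Gram flow\<close>

lemma gronwall_zero:
  fixes \<phi> \<phi>' :: "real \<Rightarrow> real"
  assumes der: "\<And>s. 0 \<le> s \<Longrightarrow> s \<le> t \<Longrightarrow> (\<phi> has_real_derivative \<phi>' s) (at s within {0..})"
    and bound: "\<And>s. 0 \<le> s \<Longrightarrow> s \<le> t \<Longrightarrow> \<phi>' s \<le> K * \<phi> s"
    and nonneg: "\<And>s. 0 \<le> s \<Longrightarrow> s \<le> t \<Longrightarrow> 0 \<le> \<phi> s"
    and "\<phi> 0 = 0" and "0 \<le> t"
  shows "\<phi> t = 0"
proof -
  define \<psi> where "\<psi> s = exp (- K * s) * \<phi> s" for s
  have \<psi>_der: "(\<psi> has_real_derivative exp (- K * s) * (\<phi>' s - K * \<phi> s)) (at s within {0..})"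
    if "0 \<le> s" "s \<le> t" for s
    unfolding \<psi>_def
    by (rule derivative_eq_intros der[OF that] refl)+ (simp add: algebra_simps)
  have "continuous_on {0..t} \<psi>"
    unfolding continuous_on_eq_continuous_within
  proof
    fix s assume "s \<in> {0..t}"
    then have "continuous (at s within {0..}) \<psi>"
      using \<psi>_der by (auto intro: DERIV_continuous)
    then show "continuous (at s within {0..t}) \<psi>"
      by (rule continuous_within_subset) auto
  qed
  then have "\<psi> t \<le> \<psi> 0"
  proof (rule DERIV_nonpos_imp_decreasing_open[OF \<open>0 \<le> t\<close>, rotated])
    fix s assume "0 < s" "s < t"
    then have "at s within {0..} = at s"
      by (intro at_within_interior) auto
    then have "DERIV \<psi> s :> exp (- K * s) * (\<phi>' s - K * \<phi> s)"
      using \<psi>_der[of s] \<open>0 < s\<close> \<open>s < t\<close> by simp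
    moreover have "exp (- K * s) * (\<phi>' s - K * \<phi> s) \<le> 0"
      using bound[of s] \<open>0 < s\<close> \<open>s < t\<close> by (simp add: mult_nonneg_nonpos)
    ultimately show "\<exists>y. DERIV \<psi> s :> y \<and> y \<le> 0"
      by blast
  qed
  then have "\<phi> t \<le> 0"
    using \<open>\<phi> 0 = 0\<close> by (simp add: \<psi>_def mult_le_0_iff)
  then show ?thesis
    using nonneg[of t] \<open>0 \<le> t\<close> by simp
qed

definition offdiag :: "real^'n^'n \<Rightarrow> real^'n^'n" where
  "offdiag A = (\<chi> i j. if i = j then 0 else A $ i $ j)"

lemma offdiag_nth [simp]: "offdiag A $ i $ j = (if i = j then 0 else A $ i $ j)"
  by (simp add: offdiag_def)

lemma offdiag_eq_0_iff: "offdiag A = 0 \<longleftrightarrow> diagonal_matrix A"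
  by (auto simp: diagonal_matrix_def vec_eq_iff)

lemma diagonal_matrix_diff_offdiag: "diagonal_matrix (A - offdiag A)"
  by (simp add: diagonal_matrix_def)

lemma inner_offdiag_diagonal: "diagonal_matrix D \<Longrightarrow> inner (offdiag A) D = 0"
  by (auto simp: diagonal_matrix_def inner_vec_def intro!: sum.neutral)

lemma inner_offdiag_offdiag: "inner (offdiag A) (offdiag B) = inner (offdiag A) B"
  using inner_offdiag_diagonal[OF diagonal_matrix_diff_offdiag, of A B]
  by (simp add: inner_diff_right)

lemma norm_offdiag_le: "norm (offdiag A) \<le> norm A"
  by (rule power2_le_imp_le) (simp_all add: power2_norm_matrix sum_mono)

lemma norm_diff_offdiag_le: "norm (A - offdiag A) \<le> norm A"
  by (rule power2_le_imp_le) (simp_all add: power2_norm_matrix sum_mono)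

lemma bounded_linear_offdiag: "bounded_linear offdiag"
  by (rule bounded_linear_intro[where K = 1]) (auto simp: vec_eq_iff norm_offdiag_le)

definition gram_field :: "real^'n^'n \<Rightarrow> real^'n^'n \<Rightarrow> real^'n^'n" where
  "gram_field D P = (1/2) *\<^sub>R ((D - P) ** P + P ** (D - P))"

lemma gram_field_alt: "gram_field D P = (1/2) *\<^sub>R (D ** P + P ** D) - P ** P"
proof -
  have "(D - P) ** P + P ** (D - P) = (D ** P + P ** D) - 2 *\<^sub>R (P ** P)"
    by (simp add: matrix_mult.diff_left matrix_mult.diff_right scaleR_2 diff_add_eq add_diff_eq
        diff_diff_eq add_ac)
  then show ?thesis
    by (simp add: gram_field_def scaleR_diff_right)
qed

lemma diagonal_matrix_gram_field:
  "diagonal_matrix D \<Longrightarrow> diagonal_matrix P \<Longrightarrow> diagonal_matrix (gram_field D P)"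
  unfolding gram_field_alt
  by (intro diagonal_matrix_diff diagonal_matrix_scaleR diagonal_matrix_add diagonal_matrix_mult)

lemma gram_field_diagonal_nth:
  fixes D P :: "real^'n^'n"
  assumes "diagonal_matrix D" "diagonal_matrix P"
  shows "gram_field D P $ i $ i = P $ i $ i * (D $ i $ i - P $ i $ i)"
proof -
  have diag_mult: "(X ** Y) $ i $ i = X $ i $ i * Y $ i $ i"
    if "diagonal_matrix X" for X Y :: "real^'n^'n"
    using that unfolding diagonal_matrix_def matrix_matrix_mult_def
    by (simp add: sum.remove[of UNIV i] sum.neutral)
  show ?thesis
    using assms by (simp add: gram_field_alt diag_mult algebra_simps)
qed

lemma gram_field_orthogonal_conj:
  assumes "Q ** transpose Q = mat 1"
  shows "transpose Q ** gram_field A B ** Q = gram_field (transpose Q ** A ** Q) (transpose Q ** B ** Q)"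
proof -
  have conj_mult: "transpose Q ** (X ** Y) ** Q = (transpose Q ** X ** Q) ** (transpose Q ** Y ** Q)" for X Y
    by (simp add: matrix_mul_assoc) (metis assms matrix_mul_assoc matrix_mul_rid)
  show ?thesis
    by (simp add: gram_field_alt conj_mult matrix_mult.diff_left matrix_mult.diff_right
        matrix_mult.add_left matrix_mult.add_right matrix_mult.scaleR_left matrix_mult.scaleR_right)
qed

text \<open>Writing \<open>P\<close> as its diagonal part plus \<open>offdiag P\<close>, the diagonal part alone yields a diagonal
  field, orthogonal to \<open>offdiag P\<close>; the remainder is linear in \<open>offdiag P\<close>.\<close>
lemma inner_offdiag_gram_field_le:
  assumes "diagonal_matrix D"
  shows "inner (offdiag P) (gram_field D P) \<le> (norm D + 2 * norm P) * (norm (offdiag P))\<^sup>2"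
proof -
  define \<Omega> where "\<Omega> = offdiag P"
  define \<Delta> where "\<Delta> = P - offdiag P"
  define E where "E = (1/2) *\<^sub>R (D ** \<Omega> + \<Omega> ** D) - (P ** \<Omega> + \<Omega> ** \<Delta>)"
  have normE: "norm E \<le> (norm D + 2 * norm P) * norm \<Omega>"
  proof -
    have "norm (D ** \<Omega> + \<Omega> ** D) \<le> norm D * norm \<Omega> + norm \<Omega> * norm D"
      by (rule norm_triangle_le[OF add_mono[OF norm_matrix_mult_le norm_matrix_mult_le]])
    then have half: "norm ((1/2) *\<^sub>R (D ** \<Omega> + \<Omega> ** D)) \<le> norm D * norm \<Omega>"
      by simp
    have "norm (P ** \<Omega> + \<Omega> ** \<Delta>) \<le> norm P * norm \<Omega> + norm \<Omega> * norm \<Delta>"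
      by (rule norm_triangle_le[OF add_mono[OF norm_matrix_mult_le norm_matrix_mult_le]])
    also have "\<dots> \<le> norm P * norm \<Omega> + norm \<Omega> * norm P"
      using mult_left_mono[OF norm_diff_offdiag_le[of P] norm_ge_zero[of \<Omega>]] by (simp add: \<Delta>_def mult.commute)
    finally have "norm (P ** \<Omega> + \<Omega> ** \<Delta>) \<le> 2 * norm P * norm \<Omega>"
      by simp
    with half have "norm ((1/2) *\<^sub>R (D ** \<Omega> + \<Omega> ** D)) + norm (P ** \<Omega> + \<Omega> ** \<Delta>)
        \<le> (norm D + 2 * norm P) * norm \<Omega>"
      by (simp add: distrib_right)
    then show ?thesis
      unfolding E_def by (rule order.trans[OF norm_triangle_ineq4])
  qed
  have "P = \<Delta> + \<Omega>"
    by (simp add: \<Delta>_def \<Omega>_def)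
  then have "gram_field D P = gram_field D \<Delta> + E"
    unfolding gram_field_alt E_def
    by (simp add: matrix_mult.add_left matrix_mult.add_right scaleR_add_right algebra_simps
        del: mult_2 mult_2_right)
  moreover have "inner \<Omega> (gram_field D \<Delta>) = 0"
    unfolding \<Omega>_def \<Delta>_def
    by (intro inner_offdiag_diagonal diagonal_matrix_gram_field assms diagonal_matrix_diff_offdiag)
  ultimately have "inner \<Omega> (gram_field D P) = inner \<Omega> E"
    by (simp add: inner_add_right)
  also have "\<dots> \<le> norm \<Omega> * norm E"
    by (rule norm_cauchy_schwarz)
  also have "\<dots> \<le> norm \<Omega> * ((norm D + 2 * norm P) * norm \<Omega>)"
    by (rule mult_left_mono[OF normE norm_ge_zero])
  finally show ?thesis
    unfolding \<Omega>_def by (simp add: power2_eq_square mult_ac)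
qed

lemma gram_has_vector_derivative:
  fixes W :: "real \<Rightarrow> real^'n^'m" and A Q :: "real^'n^'n"
  assumes "transpose A = A" and "Q ** transpose Q = mat 1"
    and W: "(W has_vector_derivative - ((1/2) *\<^sub>R (W t ** (transpose (W t) ** W t - A)))) (at t within S)"
  shows "((\<lambda>s. transpose Q ** (transpose (W s) ** W s) ** Q) has_vector_derivative
           gram_field (transpose Q ** A ** Q) (transpose Q ** (transpose (W t) ** W t) ** Q)) (at t within S)"
proof -
  define B where "B = transpose (W t) ** W t"
  define V where "V = - ((1/2) *\<^sub>R (W t ** (B - A)))"
  have "transpose B = B"
    by (simp add: B_def)
  have W': "(W has_vector_derivative V) (at t within S)"
    using W by (simp add: V_def B_def)
  have "((\<lambda>s. transpose (W s) ** W s) has_vector_derivative transpose (W t) ** V + transpose V ** W t)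
      (at t within S)"
    by (rule matrix_mult.has_vector_derivative[OF
          bounded_linear.has_vector_derivative[OF bounded_linear_transpose W'] W'])
  then have "((\<lambda>s. transpose Q ** (transpose (W s) ** W s) ** Q) has_vector_derivative
           transpose Q ** (transpose (W t) ** V + transpose V ** W t) ** Q) (at t within S)"
    by (rule has_vector_derivative_eq_rhs[OF matrix_mult.has_vector_derivative[OF
          matrix_mult.has_vector_derivative[OF has_vector_derivative_const]
          has_vector_derivative_const]]) simp
  also have "transpose (W t) ** V + transpose V ** W t = gram_field A B"
  proof -
    have "transpose (W t) ** V = (1/2) *\<^sub>R (B ** (A - B))"
      by (simp add: V_def matrix_mult.minus_right matrix_mult.scaleR_right matrix_mul_assoc
          matrix_mult.diff_right scaleR_diff_right flip: B_def)
    moreover have "transpose V ** W t = (1/2) *\<^sub>R ((A - B) ** B)"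
      using \<open>transpose B = B\<close> assms(1)
      by (simp add: V_def transpose_uminus transpose_scalar matrix_transpose_mul transpose_diff
          matrix_mult.minus_left matrix_mult.scaleR_left matrix_mult.diff_left scaleR_diff_right
          flip: matrix_mul_assoc B_def)
    ultimately show ?thesis
      by (simp add: gram_field_def scaleR_add_right add.commute)
  qed
  finally show ?thesis
    unfolding B_def gram_field_orthogonal_conj[OF assms(2)] .
qed

lemma gram_flow_stays_diagonal:
  fixes D :: "real^'n^'n" and P :: "real \<Rightarrow> real^'n^'n"
  assumes D: "diagonal_matrix D" and P0: "diagonal_matrix (P 0)"
    and P': "\<And>s. 0 \<le> s \<Longrightarrow> (P has_vector_derivative gram_field D (P s)) (at s within {0..})"
    and "0 \<le> t"
  shows "diagonal_matrix (P t)"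
proof -
  define \<phi> where "\<phi> = (\<lambda>s. (norm (offdiag (P s)))\<^sup>2)"
  have \<phi>_der: "(\<phi> has_real_derivative 2 * inner (offdiag (P s)) (gram_field D (P s))) (at s within {0..})"
    if "0 \<le> s" for s
  proof -
    have "((\<lambda>s. offdiag (P s)) has_vector_derivative offdiag (gram_field D (P s))) (at s within {0..})"
      by (rule bounded_linear.has_vector_derivative[OF bounded_linear_offdiag P'[OF that]])
    note inner_der = bounded_bilinear.has_vector_derivative[OF bounded_bilinear_inner this this]
    have eq: "inner (offdiag (P s)) (offdiag (gram_field D (P s)))
        + inner (offdiag (gram_field D (P s))) (offdiag (P s))
        = 2 * inner (offdiag (P s)) (gram_field D (P s))"
      using inner_offdiag_offdiag[of "P s" "gram_field D (P s)"]
        inner_commute[of "offdiag (gram_field D (P s))" "offdiag (P s)"] by linarith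
    show ?thesis
      using inner_der unfolding eq
      by (simp add: \<phi>_def power2_norm_eq_inner has_real_derivative_iff_has_vector_derivative)
  qed
  have "continuous_on {0..t} P"
    unfolding continuous_on_eq_continuous_within
  proof
    fix s assume "s \<in> {0..t}"
    then have "continuous (at s within {0..}) P"
      using P' by (auto intro: has_vector_derivative_continuous)
    then show "continuous (at s within {0..t}) P"
      by (rule continuous_within_subset) auto
  qed
  then have "bounded (P ` {0..t})"
    by (intro compact_imp_bounded compact_continuous_image compact_Icc)
  then obtain M where M: "\<And>s. s \<in> {0..t} \<Longrightarrow> norm (P s) \<le> M"
    unfolding bounded_iff by blast
  have "\<phi> t = 0"
  proof (rule gronwall_zero[where \<phi> = \<phi> and t = t and K = "2 * (norm D + 2 * M)"])
    fix s assume s: "0 \<le> s" "s \<le> t"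
    have "2 * inner (offdiag (P s)) (gram_field D (P s)) \<le> 2 * ((norm D + 2 * norm (P s)) * \<phi> s)"
      using inner_offdiag_gram_field_le[OF D, of "P s"] by (simp add: \<phi>_def)
    also have "\<dots> \<le> 2 * ((norm D + 2 * M) * \<phi> s)"
      using M[of s] s by (simp add: \<phi>_def mult_right_mono)
    finally show "2 * inner (offdiag (P s)) (gram_field D (P s)) \<le> 2 * (norm D + 2 * M) * \<phi> s"
      by (simp only: mult.assoc)
  qed (use \<phi>_der P0 \<open>0 \<le> t\<close> in \<open>auto simp: \<phi>_def offdiag_eq_0_iff\<close>)
  then show ?thesis
    by (simp add: \<phi>_def offdiag_eq_0_iff)
qed

lemma gradient_flow_gram_has_vector_derivative:
  fixes Ws :: "real^'d^'d" and W :: "real \<Rightarrow> real^'d^'d"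
  assumes "orthogonal_matrix Q"
    and "GDERIV (loss_var Ws) (W t) :> G" and "(W has_vector_derivative - G) (at t within S)"
  shows "((\<lambda>s. transpose Q ** (transpose (W s) ** W s) ** Q) has_vector_derivative
           gram_field (transpose Q ** (transpose Ws ** Ws) ** Q) (transpose Q ** (transpose (W t) ** W t) ** Q))
         (at t within S)"
proof -
  define A where "A = transpose Ws ** Ws"
  have "loss_var Ws = (\<lambda>V. (norm (A - transpose V ** V))\<^sup>2 / 8)"
    by (simp add: fun_eq_iff loss_var_eq_norm A_def)
  then have "G = (1/2) *\<^sub>R (W t ** (transpose (W t) ** W t - A))"
    using gderiv_unique[OF assms(2)] gderiv_gram_distance[of A "W t"] by (simp add: A_def)
  moreover have "Q ** transpose Q = mat 1"
    using assms(1) by (simp add: orthogonal_matrix_def)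
  ultimately show ?thesis
    using gram_has_vector_derivative[of A Q W] assms(3) by (simp add: A_def)
qed

lemma diagonal_gram_flow_entry_has_real_derivative:
  fixes D :: "real^'n^'n" and P :: "real \<Rightarrow> real^'n^'n"
  assumes "(P has_vector_derivative gram_field D (P t)) (at t within S)"
    and "diagonal_matrix D" "diagonal_matrix (P t)"
  shows "((\<lambda>s. P s $ i $ i) has_real_derivative P t $ i $ i * (D $ i $ i - P t $ i $ i)) (at t within S)"
proof -
  have "bounded_linear (\<lambda>X :: real^'n^'n. X $ i $ i)"
    using bounded_linear_compose[OF bounded_linear_vec_nth bounded_linear_vec_nth] by blast
  from bounded_linear.has_vector_derivative[OF this assms(1)]
  show ?thesis
    using gram_field_diagonal_nth[OF assms(2,3)] by (simp add: has_real_derivative_iff_has_vector_derivative)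
qed

theorem theorem5:
  fixes Ws :: "real^'d^'d" and W :: "real \<Rightarrow> real^'d^'d" and \<sigma>0 :: real
  assumes "\<sigma>0 > 0"
    and "transpose (W 0) ** W 0 = \<sigma>0 *\<^sub>R mat 1"
    and flow: "\<And>t. t \<ge> 0 \<Longrightarrow> \<exists>G. (GDERIV (loss_var Ws) (W t) :> G)
                      \<and> (W has_vector_derivative (- G)) (at t within {0..})"
  shows "\<exists>Q :: real^'d^'d. orthogonal_matrix Q
     \<and> (\<forall>i j. i \<noteq> j \<longrightarrow> (transpose Q ** (transpose Ws ** Ws) ** Q) $ i $ j = 0)
     \<and> (\<forall>t\<ge>0. \<forall>i j. i \<noteq> j \<longrightarrow> (transpose Q ** (transpose (W t) ** W t) ** Q) $ i $ j = 0)
     \<and> (\<forall>t\<ge>0. \<forall>i.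
          let \<sigma> = (\<lambda>s. (transpose Q ** (transpose (W s) ** W s) ** Q) $ i $ i);
              \<sigma>s = (transpose Q ** (transpose Ws ** Ws) ** Q) $ i $ i
          in (\<sigma> has_real_derivative (\<sigma> t * (\<sigma>s - \<sigma> t))) (at t within {0..}))"
proof -
  obtain Q where Q: "orthogonal_matrix Q" and D: "diagonal_matrix (transpose Q ** (transpose Ws ** Ws) ** Q)"
    using symmetric_matrix_orthogonally_diagonalizable[of "transpose Ws ** Ws"] by auto
  define P where "P s = transpose Q ** (transpose (W s) ** W s) ** Q" for s
  have P': "(P has_vector_derivative gram_field (transpose Q ** (transpose Ws ** Ws) ** Q) (P s))
      (at s within {0..})" if "0 \<le> s" for s
    using flow[OF that] gradient_flow_gram_has_vector_derivative[OF Q] unfolding P_def by blast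
  \<comment> \<open>only the diagonality of \<open>P 0\<close> matters\<close>
  have "P 0 = \<sigma>0 *\<^sub>R mat 1"
    using Q by (simp add: P_def assms(2) matrix_scalar_ac orthogonal_matrix flip: scalar_matrix_assoc)
  then have P_diag: "diagonal_matrix (P t)" if "0 \<le> t" for t
    using gram_flow_stays_diagonal[OF D _ P' that] by (simp add: diagonal_matrix_def mat_def)
  show ?thesis
  proof (intro exI[of _ Q] conjI allI impI)
    show "(transpose Q ** (transpose (W t) ** W t) ** Q) $ i $ j = 0" if "0 \<le> t" "i \<noteq> j" for t i j
      using P_diag[OF that(1)] that(2) by (simp add: diagonal_matrix_def P_def)
    show "let \<sigma> = (\<lambda>s. (transpose Q ** (transpose (W s) ** W s) ** Q) $ i $ i);
              \<sigma>s = (transpose Q ** (transpose Ws ** Ws) ** Q) $ i $ i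
          in (\<sigma> has_real_derivative (\<sigma> t * (\<sigma>s - \<sigma> t))) (at t within {0..})" if "0 \<le> t" for t i
      using diagonal_gram_flow_entry_has_real_derivative[OF P'[OF that] D P_diag[OF that]]
      by (simp add: P_def)
  qed (use Q D in \<open>simp_all add: diagonal_matrix_def\<close>)
qed

end
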